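(* Let $q>0$, $q\neq1$. For every integer $N\ge 2$, $$\Big(x\frac{d}{dx}-N\Big)H_N(x;q)=2\,[N]_q\,[N-1]_q\,H_{N-2}(x;q).$$
   Context: For $n\ge 0$ let $[n]_q=\frac{q^n-1}{q-1}$, $[0]_q!=1$, $[n]_q!=[1]_q\cdots[n]_q$, and $e_q(z)=\sum_{n\ge0}z^n/[n]_q!$. The $q$-Hermite polynomials $H_N(x;q)$ are defined by the identity of formal power series in $t$: $e^{-t^2}e_q([2]_q t x)=\sum_{N\ge0}H_N(x;q)\,t^N/[N]_q!$. *)

theory Defs
  imports "HOL-Analysis.Analysis" "HOL-Computational_Algebra.Formal_Power_Series"
begin

definition qint :: "real \<Rightarrow> nat \<Rightarrow> real" where
  "qint q n = (q ^ n - 1) / (q - 1)"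

definition qfact :: "real \<Rightarrow> nat \<Rightarrow> real" where
  "qfact q n = (\<Prod>k=1..n. qint q k)"

definition qexp_fps :: "real \<Rightarrow> real \<Rightarrow> real fps" where
  "qexp_fps q c = Abs_fps (\<lambda>n. c ^ n / qfact q n)"

text \<open>q-Hermite polynomials: e^{-t^2} e_q([2]_q t x) = sum_N H_N(x;q) t^N / [N]_q!.\<close>
definition qHermite :: "nat \<Rightarrow> real \<Rightarrow> real \<Rightarrow> real" where
  "qHermite N x q = qfact q N *
     fps_nth (fps_compose (fps_exp 1) (- (fps_X ^ 2)) * qexp_fps q (qint q 2 * x)) N"

end

theory Submission
  imports Defs
begin

text \<open>Writing e^{-t^2} = \<Sum>_i \<epsilon>_i t^i, the generating function gives
  H_N(x) = [N]_q! \<Sum>_{i \<le> N} \<epsilon>_i ([2]_q x)^{N-i} / [N-i]_q!.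
  The Euler operator x d/dx - N multiplies the monomial x^{N-i} by -i, and
  -i \<epsilon>_i = 2 \<epsilon>_{i-2} (the ODE of e^{-t^2}), so the shifted sum is again a
  q-Hermite polynomial, of degree N - 2, up to the factor [N]_q! / [N-2]_q!.\<close>

definition exp_neg_sq_coeff :: "nat \<Rightarrow> real" where
  "exp_neg_sq_coeff n = (if even n then (-1) ^ (n div 2) / fact (n div 2) else 0)"

lemma fps_nth_neg_X_squared_power:
  "fps_nth ((- (fps_X ^ 2) :: 'a :: comm_ring_1 fps) ^ i) n = (if n = 2 * i then (-1) ^ i else 0)"
proof -
  have "(- (fps_X ^ 2) :: 'a fps) ^ i = (fps_const (-1) * fps_X ^ 2) ^ i"
    by simp
  also have "\<dots> = fps_const ((-1) ^ i) * fps_X ^ (2 * i)"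
    by (simp only: power_mult_distrib fps_const_power power_mult)
  finally show ?thesis
    by (simp only:) simp
qed

lemma fps_nth_exp_neg_X_squared:
  "fps_nth (fps_compose (fps_exp 1) (- (fps_X ^ 2)) :: real fps) n = exp_neg_sq_coeff n"
proof -
  have "fps_nth (fps_compose (fps_exp 1) (- (fps_X ^ 2)) :: real fps) n
      = (\<Sum>i\<in>{0..n} \<inter> {i. n = 2 * i}. (-1) ^ i / fact i)"
    by (simp add: fps_compose_nth fps_nth_neg_X_squared_power sum.inter_restrict if_distrib
                  cong: if_cong)
  also have "{0..n} \<inter> {i. n = 2 * i} = (if even n then {n div 2} else {})"
    by auto
  finally show ?thesis
    by (simp add: exp_neg_sq_coeff_def)
qed

lemma exp_neg_sq_coeff_recurrence:
  "- real (Suc (Suc i)) * exp_neg_sq_coeff (Suc (Suc i)) = 2 * exp_neg_sq_coeff i"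
proof (cases "even i")
  case True
  then obtain k where "i = 2 * k" by blast
  moreover have "(fact k :: real) * (1 + real k) \<noteq> 0"
    by (simp add: add_nonneg_eq_0_iff)
  ultimately show ?thesis
    by (simp add: exp_neg_sq_coeff_def field_simps)
qed (simp add: exp_neg_sq_coeff_def)

lemma qfact_Suc: "qfact q (Suc n) = qfact q n * qint q (Suc n)"
  unfolding qfact_def by simp

definition qHermite_coeff :: "real \<Rightarrow> nat \<Rightarrow> nat \<Rightarrow> real" where
  "qHermite_coeff q N i = qfact q N * exp_neg_sq_coeff i / qfact q (N - i)"

lemma qHermite_explicit:
  "qHermite N x q = (\<Sum>i=0..N. qHermite_coeff q N i * (qint q 2 * x) ^ (N - i))"
  unfolding qHermite_def qHermite_coeff_def
  by (simp add: fps_mult_nth fps_nth_exp_neg_X_squared qexp_fps_def sum_distrib_left mult.assoc)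

lemma qHermite_coeff_Suc_0: "qHermite_coeff q N (Suc 0) = 0"
  by (simp add: qHermite_coeff_def exp_neg_sq_coeff_def)

lemma qHermite_coeff_recurrence:
  "- real (Suc (Suc i)) * qHermite_coeff q (Suc (Suc N)) (Suc (Suc i))
     = 2 * qint q (Suc (Suc N)) * qint q (Suc N) * qHermite_coeff q N i"
proof -
  have "- real (Suc (Suc i)) * qHermite_coeff q (Suc (Suc N)) (Suc (Suc i))
      = (- real (Suc (Suc i)) * exp_neg_sq_coeff (Suc (Suc i)))
          * qfact q (Suc (Suc N)) / qfact q (N - i)"
    by (simp add: qHermite_coeff_def)
  also have "\<dots> = 2 * exp_neg_sq_coeff i * qfact q (Suc (Suc N)) / qfact q (N - i)"
    by (simp only: exp_neg_sq_coeff_recurrence)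
  finally show ?thesis
    by (simp add: qHermite_coeff_def qfact_Suc)
qed

lemma euler_operator_sum:
  fixes a x :: real and c :: "nat \<Rightarrow> real"
  shows "x * deriv (\<lambda>y. \<Sum>i=0..N. c i * (a * y) ^ (N - i)) x
           - real N * (\<Sum>i=0..N. c i * (a * x) ^ (N - i))
         = (\<Sum>i=0..N. - real i * c i * (a * x) ^ (N - i))"
proof -
  have "deriv (\<lambda>y. \<Sum>i=0..N. c i * (a * y) ^ (N - i)) x
          = (\<Sum>i=0..N. c i * (real (N - i) * (a * x) ^ (N - i - 1) * a))"
    by (rule DERIV_imp_deriv) (auto intro!: derivative_eq_intros sum.cong)
  moreover have "x * (c i * (real m * (a * x) ^ (m - 1) * a)) = c i * real m * (a * x) ^ m"
    for i m
    by (cases m) auto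
  ultimately have "x * deriv (\<lambda>y. \<Sum>i=0..N. c i * (a * y) ^ (N - i)) x
           = (\<Sum>i=0..N. c i * real (N - i) * (a * x) ^ (N - i))"
    by (simp only: sum_distrib_left)
  then show ?thesis
    unfolding sum_distrib_left sum_subtractf[symmetric] \<open>x * deriv _ x = _\<close>
    by (intro sum.cong refl) (simp add: of_nat_diff algebra_simps)
qed

theorem mainTheorem3:
  fixes q x :: real and N :: nat
  assumes "q > 0" and "q \<noteq> 1" and "N \<ge> 2"
  shows "x * deriv (\<lambda>y. qHermite N y q) x - real N * qHermite N x q
         = 2 * qint q N * qint q (N - 1) * qHermite (N - 2) x q"
proof -
  obtain M where N: "N = Suc (Suc M)"
    using assms(3) by (metis add_2_eq_Suc le_iff_add)
  define a where "a = qint q 2 * x"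
  define g where "g i = - real i * qHermite_coeff q N i * a ^ (N - i)" for i
  have "x * deriv (\<lambda>y. qHermite N y q) x - real N * qHermite N x q = (\<Sum>i=0..N. g i)"
    unfolding qHermite_explicit g_def a_def by (rule euler_operator_sum)
  also have "\<dots> = g 0 + g 1 + (\<Sum>j=0..M. g (Suc (Suc j)))"
    unfolding N by (simp only: sum.atLeast0_atMost_Suc_shift add.assoc) simp
  also have "\<dots> = (\<Sum>j=0..M. 2 * qint q N * qint q (N - 1)
                                  * (qHermite_coeff q M j * a ^ (M - j)))"
    unfolding g_def N qHermite_coeff_recurrence by (simp add: qHermite_coeff_Suc_0 mult.assoc)
  also have "\<dots> = 2 * qint q N * qint q (N - 1) * qHermite (N - 2) x q"
    by (simp add: qHermite_explicit N a_def sum_distrib_left)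
  finally show ?thesis .
qed

end
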